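(* Let $\vec{\mathcal{X}}=(\mathcal{X}_0,\mathcal{X}_1)$ be a couple of rotation invariant pseudolattices and let $\vec B=(B_0,B_1)$ be a complex Banach couple. Then for every $s\in\mathbb{A}$: (i) if $f\in\mathcal{F}_{\vec{\mathcal{X}}}(\vec B)$, then $f(s)\in\vec B_{\vec{\mathcal{X}},|s|}$; (ii) if $x\in\vec B_{\vec{\mathcal{X}},|s|}$, then there exists $f\in\mathcal{F}_{\vec{\mathcal{X}}}(\vec B)$ with $f(s)=x$; (iii) $\vec B_{\vec{\mathcal{X}},s}=\vec B_{\vec{\mathcal{X}},|s|}$ with equality of norms.
   Context: A pseudolattice $\mathcal{X}$ assigns to every complex Banach space $B$ a Banach space $\mathcal{X}(B)$ of two-sided sequences $\{b_n\}_{n\in\mathbb{Z}}$ in $B$ such that: if $A$ is a closed subspace of $B$ then $\mathcal{X}(A)$ is a closed subspace of $\mathcal{X}(B)$; there is $C=C(\mathcal X)>0$ with $\|\{Ta_n\}\|_{\mathcal{X}(B)}\le C\|T\|_{A\to B}\|\{a_n\}\|_{\mathcal{X}(A)}$ for all bounded linear $T:A\to B$ and $\{a_n\}\in\mathcal X(A)$; and $\|b_m\|_B\le\|\{b_n\}\|_{\mathcal{X}(B)}$ for all $m$. A couple $(\mathcal X_0,\mathcal X_1)$ is rotation invariant if for every real $\tau$ and every Banach space $B$ the map $\{b_n\}\mapsto\{e^{in\tau}b_n\}$ is an isometry of $\mathcal X_j(B)$ onto itself, $j=0,1$. For a Banach couple $\vec B=(B_0,B_1)$, $\mathcal{J}(\vec{\mathcal{X}},\vec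 B)$ is the Banach space of sequences $\{b_n\}_{n\in\mathbb Z}\subset B_0\cap B_1$ with $\{b_n\}\in\mathcal{X}_0(B_0)$ and $\{e^nb_n\}\in\mathcal{X}_1(B_1)$, normed by $\max\{\|\{b_n\}\|_{\mathcal{X}_0(B_0)},\|\{e^nb_n\}\|_{\mathcal{X}_1(B_1)}\}$. Let $\mathbb{A}=\{z\in\mathbb{C}:1<|z|<e\}$. For $s\in\mathbb{A}$, $\vec B_{\vec{\mathcal{X}},s}$ is the space of all $b=\sum_{n\in\mathbb Z}s^nb_n$ (convergence in $B_0+B_1$) with $\{b_n\}\in\mathcal{J}(\vec{\mathcal{X}},\vec B)$, normed by the infimum of $\|\{b_n\}\|_{\mathcal J(\vec{\mathcal X},\vec B)}$ over all such representations. $\mathcal{F}_{\vec{\mathcal{X}}}(\vec B)$ denotes the Banach space of analytic functions $f:\mathbb{A}\to B_0+B_1$ of the form $f(z)=\sum_{n\in\mathbb Z}z^nb_n$ with $\{b_n\}\in\mathcal{J}(\vec{\mathcal{X}},\vec B)$, normed by $\|f\|=\|\{b_n\}\|_{\mathcal{J}(\vec{\mathcal{X}},\vec B)}$. *)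

theory Defs
  imports "HOL-Analysis.Analysis"
begin

class cnormed = real_normed_vector +
  fixes scaleCx :: "complex \<Rightarrow> 'a \<Rightarrow> 'a"
  assumes scaleCx_add_right: "scaleCx a (x + y) = scaleCx a x + scaleCx a y"
    and scaleCx_add_left: "scaleCx (a + b) x = scaleCx a x + scaleCx b x"
    and scaleCx_scaleCx: "scaleCx a (scaleCx b x) = scaleCx (a * b) x"
    and scaleCx_of_real: "scaleCx (complex_of_real r) x = scaleR r x"
    and norm_scaleCx: "norm (scaleCx a x) = cmod a * norm x"

text \<open>A complex Banach space is given by a carrier set S inside an ambient type,
  with explicitly given zero, addition and complex scalar multiplication, and a
  norm function N (only its values on S matter).\<close>

definition is_cbanach ::
  "'w \<Rightarrow> ('w \<Rightarrow> 'w \<Rightarrow> 'w) \<Rightarrow> (complex \<Rightarrow> 'w \<Rightarrow> 'w) \<Rightarrow> 'w set \<Rightarrow> ('w \<Rightarrow> real) \<Rightarrow> bool"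
where
  "is_cbanach z pl sc S N \<longleftrightarrow>
     z \<in> S \<and>
     (\<forall>x\<in>S. \<forall>y\<in>S. pl x y \<in> S) \<and>
     (\<forall>a. \<forall>x\<in>S. sc a x \<in> S) \<and>
     (\<forall>x\<in>S. 0 \<le> N x \<and> (N x = 0 \<longleftrightarrow> x = z)) \<and>
     (\<forall>a. \<forall>x\<in>S. N (sc a x) = cmod a * N x) \<and>
     (\<forall>x\<in>S. \<forall>y\<in>S. N (pl x y) \<le> N x + N y) \<and>
     (\<forall>f :: nat \<Rightarrow> 'w. (\<forall>k. f k \<in> S) \<longrightarrow>
        (\<forall>e>0. \<exists>K. \<forall>m\<ge>K. \<forall>n\<ge>K. N (pl (f m) (sc (-1) (f n))) < e) \<longrightarrow>
        (\<exists>x\<in>S. (\<lambda>k. N (pl (f k) (sc (-1) x))) \<longlonglongrightarrow> 0))"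

definition banach_sp :: "'v::cnormed set \<Rightarrow> ('v \<Rightarrow> real) \<Rightarrow> bool" where
  "banach_sp S N \<longleftrightarrow> is_cbanach 0 (+) scaleCx S N"

definition seq_banach_sp :: "(int \<Rightarrow> 'v::cnormed) set \<Rightarrow> ((int \<Rightarrow> 'v) \<Rightarrow> real) \<Rightarrow> bool" where
  "seq_banach_sp S N \<longleftrightarrow>
     is_cbanach (\<lambda>n. 0) (\<lambda>x y n. x n + y n) (\<lambda>a x n. scaleCx a (x n)) S N"

definition closed_subsp :: "'w set \<Rightarrow> 'w set \<Rightarrow> ('w \<Rightarrow> 'w \<Rightarrow> 'w) \<Rightarrow> (complex \<Rightarrow> 'w \<Rightarrow> 'w)
    \<Rightarrow> ('w \<Rightarrow> real) \<Rightarrow> bool" where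
  "closed_subsp A B pl sc NB \<longleftrightarrow> A \<subseteq> B \<and>
     (\<forall>x\<in>A. \<forall>y\<in>A. pl x y \<in> A) \<and> (\<forall>a. \<forall>x\<in>A. sc a x \<in> A) \<and> A \<noteq> {} \<and>
     (\<forall>f :: nat \<Rightarrow> 'w. \<forall>x\<in>B. (\<forall>k. f k \<in> A) \<longrightarrow>
        (\<lambda>k. NB (pl (f k) (sc (-1) x))) \<longlonglongrightarrow> 0 \<longrightarrow> x \<in> A)"

text \<open>A pseudolattice is a map sending each complex Banach space (B, NB) (here: inside
  the ambient space 'v) to a Banach space of two-sided sequences in B, given as
  (carrier, norm).\<close>
type_synonym 'v pseudo = "'v set \<times> ('v \<Rightarrow> real) \<Rightarrow> (int \<Rightarrow> 'v) set \<times> ((int \<Rightarrow> 'v) \<Rightarrow> real)"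

definition bounded_lin_op ::
  "'v::cnormed set \<Rightarrow> ('v \<Rightarrow> real) \<Rightarrow> 'v set \<Rightarrow> ('v \<Rightarrow> real) \<Rightarrow> ('v \<Rightarrow> 'v) \<Rightarrow> real \<Rightarrow> bool"
where
  "bounded_lin_op A NA B NB T M \<longleftrightarrow>
     (\<forall>x\<in>A. T x \<in> B) \<and>
     (\<forall>x\<in>A. \<forall>y\<in>A. T (x + y) = T x + T y) \<and>
     (\<forall>a. \<forall>x\<in>A. T (scaleCx a x) = scaleCx a (T x)) \<and>
     (\<forall>x\<in>A. NB (T x) \<le> M * NA x)"

definition pseudolattice :: "'v::cnormed pseudo \<Rightarrow> bool" where
  "pseudolattice X \<longleftrightarrow>
     (\<forall>B NB. banach_sp B NB \<longrightarrow>
        seq_banach_sp (fst (X (B, NB))) (snd (X (B, NB))) \<and>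
        (\<forall>b\<in>fst (X (B, NB)). \<forall>m. b m \<in> B \<and> NB (b m) \<le> snd (X (B, NB)) b)) \<and>
     (\<forall>A B NB. banach_sp B NB \<longrightarrow>
        closed_subsp A B (+) scaleCx NB \<longrightarrow>
        closed_subsp (fst (X (A, NB))) (fst (X (B, NB)))
           (\<lambda>x y n. x n + y n) (\<lambda>a x n. scaleCx a (x n)) (snd (X (B, NB))) \<and>
        (\<forall>b\<in>fst (X (A, NB)). snd (X (A, NB)) b = snd (X (B, NB)) b)) \<and>
     (\<exists>C>0. \<forall>A NA B NB T M. banach_sp A NA \<longrightarrow> banach_sp B NB \<longrightarrow> 0 \<le> M \<longrightarrow>
        bounded_lin_op A NA B NB T M \<longrightarrow>
        (\<forall>a\<in>fst (X (A, NA)).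
           (\<lambda>n. T (a n)) \<in> fst (X (B, NB)) \<and>
           snd (X (B, NB)) (\<lambda>n. T (a n)) \<le> C * M * snd (X (A, NA)) a))"

definition rotation_invariant :: "'v::cnormed pseudo \<Rightarrow> bool" where
  "rotation_invariant X \<longleftrightarrow>
     (\<forall>(\<tau>::real) B NB. banach_sp B NB \<longrightarrow>
        (\<forall>b\<in>fst (X (B, NB)).
           (\<lambda>n. scaleCx (cis (of_int n * \<tau>)) (b n)) \<in> fst (X (B, NB)) \<and>
           snd (X (B, NB)) (\<lambda>n. scaleCx (cis (of_int n * \<tau>)) (b n)) = snd (X (B, NB)) b) \<and>
        (\<lambda>b n. scaleCx (cis (of_int n * \<tau>)) (b n)) ` fst (X (B, NB)) = fst (X (B, NB)))"

definition rot_inv_couple :: "'v::cnormed pseudo \<Rightarrow> 'v pseudo \<Rightarrow> bool" where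
  "rot_inv_couple X0 X1 \<longleftrightarrow> rotation_invariant X0 \<and> rotation_invariant X1"

text \<open>A (compatible) complex Banach couple: two Banach spaces continuously embedded in a
  common Hausdorff topological vector space; here the ambient space 'v is a complex
  normed vector space (B_0 + B_1 with its K-norm shows no generality is lost).\<close>
definition banach_couple :: "'v::cnormed set \<Rightarrow> ('v \<Rightarrow> real) \<Rightarrow> 'v set \<Rightarrow> ('v \<Rightarrow> real) \<Rightarrow> bool"
where
  "banach_couple B0 N0 B1 N1 \<longleftrightarrow>
     banach_sp B0 N0 \<and> banach_sp B1 N1 \<and>
     (\<exists>c. \<forall>x\<in>B0. norm x \<le> c * N0 x) \<and> (\<exists>c. \<forall>x\<in>B1. norm x \<le> c * N1 x)"

definition sum_space :: "'v::cnormed set \<Rightarrow> 'v set \<Rightarrow> 'v set" where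
  "sum_space B0 B1 = {a + b | a b. a \<in> B0 \<and> b \<in> B1}"

definition sum_norm :: "'v::cnormed set \<Rightarrow> ('v \<Rightarrow> real) \<Rightarrow> 'v set \<Rightarrow> ('v \<Rightarrow> real) \<Rightarrow> 'v \<Rightarrow> real" where
  "sum_norm B0 N0 B1 N1 x = Inf {N0 a + N1 b | a b. a \<in> B0 \<and> b \<in> B1 \<and> x = a + b}"

definition zsum_conv :: "'v::cnormed set \<Rightarrow> ('v \<Rightarrow> real) \<Rightarrow> 'v set \<Rightarrow> ('v \<Rightarrow> real)
    \<Rightarrow> (int \<Rightarrow> 'v) \<Rightarrow> 'v \<Rightarrow> bool" where
  "zsum_conv B0 N0 B1 N1 u x \<longleftrightarrow>
     x \<in> sum_space B0 B1 \<and>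
     (\<forall>e>0. \<exists>K::nat. \<forall>M\<ge>K. \<forall>N\<ge>K.
        sum_norm B0 N0 B1 N1 (x - (\<Sum>n\<in>{- int N..int M}. u n)) < e)"

definition J_space :: "'v::cnormed pseudo \<Rightarrow> 'v pseudo \<Rightarrow> 'v set \<Rightarrow> ('v \<Rightarrow> real) \<Rightarrow> 'v set
    \<Rightarrow> ('v \<Rightarrow> real) \<Rightarrow> (int \<Rightarrow> 'v) set" where
  "J_space X0 X1 B0 N0 B1 N1 =
     {b. (\<forall>n. b n \<in> B0 \<inter> B1) \<and> b \<in> fst (X0 (B0, N0)) \<and>
         (\<lambda>n. scaleCx (exp (of_int n)) (b n)) \<in> fst (X1 (B1, N1))}"

definition J_norm :: "'v::cnormed pseudo \<Rightarrow> 'v pseudo \<Rightarrow> 'v set \<Rightarrow> ('v \<Rightarrow> real) \<Rightarrow> 'v set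
    \<Rightarrow> ('v \<Rightarrow> real) \<Rightarrow> (int \<Rightarrow> 'v) \<Rightarrow> real" where
  "J_norm X0 X1 B0 N0 B1 N1 b =
     max (snd (X0 (B0, N0)) b) (snd (X1 (B1, N1)) (\<lambda>n. scaleCx (exp (of_int n)) (b n)))"

definition annulus :: "complex set" where
  "annulus = {z. 1 < cmod z \<and> cmod z < exp 1}"

definition Bs_space :: "'v::cnormed pseudo \<Rightarrow> 'v pseudo \<Rightarrow> 'v set \<Rightarrow> ('v \<Rightarrow> real) \<Rightarrow> 'v set
    \<Rightarrow> ('v \<Rightarrow> real) \<Rightarrow> complex \<Rightarrow> 'v set" where
  "Bs_space X0 X1 B0 N0 B1 N1 s =
     {x. \<exists>b\<in>J_space X0 X1 B0 N0 B1 N1. zsum_conv B0 N0 B1 N1 (\<lambda>n. scaleCx (s powi n) (b n)) x}"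

definition Bs_norm :: "'v::cnormed pseudo \<Rightarrow> 'v pseudo \<Rightarrow> 'v set \<Rightarrow> ('v \<Rightarrow> real) \<Rightarrow> 'v set
    \<Rightarrow> ('v \<Rightarrow> real) \<Rightarrow> complex \<Rightarrow> 'v \<Rightarrow> real" where
  "Bs_norm X0 X1 B0 N0 B1 N1 s x =
     Inf {J_norm X0 X1 B0 N0 B1 N1 b | b. b \<in> J_space X0 X1 B0 N0 B1 N1 \<and>
            zsum_conv B0 N0 B1 N1 (\<lambda>n. scaleCx (s powi n) (b n)) x}"

definition sum_analytic :: "'v::cnormed set \<Rightarrow> ('v \<Rightarrow> real) \<Rightarrow> 'v set \<Rightarrow> ('v \<Rightarrow> real)
    \<Rightarrow> complex set \<Rightarrow> (complex \<Rightarrow> 'v) \<Rightarrow> bool" where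
  "sum_analytic B0 N0 B1 N1 U f \<longleftrightarrow>
     (\<forall>z\<in>U. f z \<in> sum_space B0 B1) \<and>
     (\<forall>z\<in>U. \<exists>d\<in>sum_space B0 B1. \<forall>e>0. \<exists>r>0. \<forall>w\<in>U. w \<noteq> z \<and> cmod (w - z) < r \<longrightarrow>
        sum_norm B0 N0 B1 N1 (scaleCx (inverse (w - z)) (f w - f z) - d) < e)"

definition F_space :: "'v::cnormed pseudo \<Rightarrow> 'v pseudo \<Rightarrow> 'v set \<Rightarrow> ('v \<Rightarrow> real) \<Rightarrow> 'v set
    \<Rightarrow> ('v \<Rightarrow> real) \<Rightarrow> (complex \<Rightarrow> 'v) set" where
  "F_space X0 X1 B0 N0 B1 N1 =
     {f. sum_analytic B0 N0 B1 N1 annulus f \<and>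
         (\<exists>b\<in>J_space X0 X1 B0 N0 B1 N1.
            \<forall>z\<in>annulus. zsum_conv B0 N0 B1 N1 (\<lambda>n. scaleCx (z powi n) (b n)) (f z))}"

end

theory Submission
  imports Defs
begin

text \<open>Write \<open>s = |s| e\<^sup>i\<^sup>\<theta>\<close>. Multiplying the coefficients by \<open>e\<^sup>i\<^sup>n\<^sup>\<theta>\<close> is an isometry of \<open>\<J>\<close>
  (rotation invariance of both pseudolattices), and it turns \<open>\<Sum> |s|\<^sup>n b\<^sub>n\<close> into
  \<open>\<Sum> s\<^sup>n b\<^sub>n\<close>; hence the spaces at \<open>s\<close> and at \<open>|s|\<close> coincide isometrically, and (i) is
  immediate.
  For (ii), a representation \<open>x = \<Sum> s\<^sup>n b\<^sub>n\<close> with \<open>b \<in> \<J>\<close> defines the Laurent series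
  \<open>f(z) = \<Sum> z\<^sup>n b\<^sub>n\<close>. As \<open>N\<^sub>0(b\<^sub>n)\<close> is bounded and \<open>N\<^sub>1(b\<^sub>n) = O(e\<^sup>-\<^sup>n)\<close>, its principal part
  converges in \<open>B\<^sub>0\<close> for \<open>|z| > 1\<close> and its regular part in \<open>B\<^sub>1\<close> for \<open>|z| < e\<close>; a
  quadratic remainder estimate for \<open>z\<^sup>n\<close> and \<open>z\<^sup>-\<^sup>n\<close> justifies termwise differentiation, so \<open>f\<close>
  is analytic into \<open>B\<^sub>0 + B\<^sub>1\<close>; and \<open>f(s) = x\<close> because limits in \<open>B\<^sub>0 + B\<^sub>1\<close> are unique.\<close>

lemma scaleCx_zero_right [simp]: "scaleCx a (0::'v::cnormed) = 0"
proof -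
  have "scaleCx a (0::'v) = scaleCx a 0 + scaleCx a 0"
    by (simp flip: scaleCx_add_right)
  then show ?thesis by simp
qed

lemma scaleCx_zero_left [simp]: "scaleCx 0 (x::'v::cnormed) = 0"
  using scaleCx_of_real[of 0 x] by simp

lemma scaleCx_one [simp]: "scaleCx 1 (x::'v::cnormed) = x"
  using scaleCx_of_real[of 1 x] by simp

lemma scaleCx_minus_one: "scaleCx (-1) (x::'v::cnormed) = - x"
  using scaleCx_of_real[of "-1" x] by simp

lemma scaleCx_minus_right: "scaleCx a (- (x::'v::cnormed)) = - scaleCx a x"
  by (metis add.right_inverse eq_neg_iff_add_eq_0 scaleCx_add_right scaleCx_zero_right)

lemma scaleCx_minus_left: "scaleCx (- a) (x::'v::cnormed) = - scaleCx a x"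
  by (metis add.right_inverse eq_neg_iff_add_eq_0 scaleCx_add_left scaleCx_zero_left)

lemma scaleCx_diff_right: "scaleCx a ((x::'v::cnormed) - y) = scaleCx a x - scaleCx a y"
  unfolding diff_conv_add_uminus by (simp only: scaleCx_add_right scaleCx_minus_right)

lemma scaleCx_diff_left: "scaleCx (a - b) (x::'v::cnormed) = scaleCx a x - scaleCx b x"
  unfolding diff_conv_add_uminus by (simp only: scaleCx_add_left scaleCx_minus_left)

lemma scaleCx_sum_right: "scaleCx a (\<Sum>i\<in>I. f i) = (\<Sum>i\<in>I. scaleCx a (f i :: 'v::cnormed))"
  by (induction I rule: infinite_finite_induct) (auto simp: scaleCx_add_right)

section \<open>Complex Banach spaces given by a carrier and a norm\<close>

locale cbanach_space =
  fixes S :: "'v::cnormed set" and N :: "'v \<Rightarrow> real"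
  assumes banach: "banach_sp S N"
begin

lemma zero_mem: "0 \<in> S"
  and add_mem: "x \<in> S \<Longrightarrow> y \<in> S \<Longrightarrow> x + y \<in> S"
  and scale_mem: "x \<in> S \<Longrightarrow> scaleCx a x \<in> S"
  and norm_nonneg: "x \<in> S \<Longrightarrow> 0 \<le> N x"
  and norm_eq_zero_iff: "x \<in> S \<Longrightarrow> N x = 0 \<longleftrightarrow> x = 0"
  and norm_scale: "x \<in> S \<Longrightarrow> N (scaleCx a x) = cmod a * N x"
  and norm_triangle: "x \<in> S \<Longrightarrow> y \<in> S \<Longrightarrow> N (x + y) \<le> N x + N y"
  using banach by (simp_all add: banach_sp_def is_cbanach_def)

lemma cauchy_converges:
  assumes "\<And>k. f k \<in> S" and "\<And>e. e > 0 \<Longrightarrow> \<exists>K. \<forall>m\<ge>K. \<forall>n\<ge>K. N (f m - f n) < e"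
  shows "\<exists>x\<in>S. (\<lambda>k. N (f k - x)) \<longlonglongrightarrow> 0"
  using banach assms unfolding banach_sp_def is_cbanach_def
  by (simp add: scaleCx_minus_one flip: diff_conv_add_uminus)

lemma uminus_mem: "x \<in> S \<Longrightarrow> - x \<in> S"
  using scale_mem[of x "-1"] by (simp add: scaleCx_minus_one)

lemma diff_mem: "x \<in> S \<Longrightarrow> y \<in> S \<Longrightarrow> x - y \<in> S"
  unfolding diff_conv_add_uminus by (intro add_mem uminus_mem)

lemma sum_mem: "(\<And>i. i \<in> I \<Longrightarrow> f i \<in> S) \<Longrightarrow> (\<Sum>i\<in>I. f i) \<in> S"
  by (induction I rule: infinite_finite_induct) (auto simp: zero_mem add_mem)

lemma norm_zero [simp]: "N 0 = 0"
  using norm_eq_zero_iff[OF zero_mem] by simp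

lemma norm_minus: "x \<in> S \<Longrightarrow> N (- x) = N x"
  using norm_scale[of x "-1"] by (simp add: scaleCx_minus_one)

lemma norm_minus_commute: "x \<in> S \<Longrightarrow> y \<in> S \<Longrightarrow> N (x - y) = N (y - x)"
  using norm_minus[of "y - x"] diff_mem[of y x] by simp

lemma norm_diff_le: "x \<in> S \<Longrightarrow> y \<in> S \<Longrightarrow> N (x - y) \<le> N x + N y"
  using norm_triangle[of x "- y"] norm_minus[of y] uminus_mem[of y] by simp

lemma norm_sum_le: "(\<And>i. i \<in> I \<Longrightarrow> f i \<in> S) \<Longrightarrow> N (\<Sum>i\<in>I. f i) \<le> (\<Sum>i\<in>I. N (f i))"
proof (induction I rule: infinite_finite_induct)
  case (insert x F)
  then have "N (f x + sum f F) \<le> N (f x) + N (sum f F)"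
    by (intro norm_triangle sum_mem) auto
  with insert show ?case by simp
qed simp_all

lemma limit_unique:
  assumes "L \<in> S" "L' \<in> S" "\<And>k. A k \<in> S"
    and "(\<lambda>k. N (L - A k)) \<longlonglongrightarrow> 0" "(\<lambda>k. N (L' - A k)) \<longlonglongrightarrow> 0"
  shows "L = L'"
proof -
  have "N (L - L') \<le> N (L - A k) + N (L' - A k)" for k
    using norm_diff_le[of "L - A k" "L' - A k"] assms(1-3) by (simp add: diff_mem)
  then have "N (L - L') \<le> 0"
    using LIMSEQ_le[OF tendsto_const tendsto_add[OF assms(4,5)]] by simp
  then show ?thesis
    using norm_nonneg norm_eq_zero_iff diff_mem assms(1,2) by fastforce
qed

lemma limit_norm_le:
  assumes "L \<in> S" "\<And>k. A k \<in> S" "(\<lambda>k. N (L - A k)) \<longlonglongrightarrow> 0" "\<And>k. N (A k) \<le> B"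
  shows "N L \<le> B"
proof -
  have "N L \<le> N (L - A k) + B" for k
    using norm_triangle[of "L - A k" "A k"] assms(1) assms(2,4)[of k] diff_mem by fastforce
  then have "N L \<le> 0 + B"
    by (intro LIMSEQ_le[OF tendsto_const tendsto_add[OF assms(3) tendsto_const]]) auto
  then show ?thesis by simp
qed

lemma norm_tendsto_zeroI:
  assumes "\<And>k. x k \<in> S" "\<And>k. N (x k) \<le> g k" "g \<longlonglongrightarrow> 0"
  shows "(\<lambda>k. N (x k)) \<longlonglongrightarrow> 0"
  using assms norm_nonneg by (intro Lim_null_comparison[OF _ assms(3)]) simp

lemma absolutely_summable_converges:
  assumes c: "\<And>k. c k \<in> S" and sm: "summable (\<lambda>k. N (c k))"
  shows "\<exists>L\<in>S. (\<lambda>M. N (L - (\<Sum>k<M. c k))) \<longlonglongrightarrow> 0"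
proof -
  let ?A = "\<lambda>M. \<Sum>k<M. c k"
  have A_mem: "?A M \<in> S" for M using c by (intro sum_mem)
  have cauchy_le: "N (?A m - ?A n) < e" if "\<forall>m\<ge>K. \<forall>n. norm (\<Sum>k=m..<n. N (c k)) < e" "K \<le> n" "n \<le> m"
    for e K m n
  proof -
    have "?A m - ?A n = (\<Sum>k=n..<m. c k)"
      using sum_diff_nat_ivl[of 0 n m c] that(3) by (simp add: lessThan_atLeast0)
    then have "N (?A m - ?A n) \<le> (\<Sum>k=n..<m. N (c k))" using norm_sum_le[of "{n..<m}" c] c by simp
    also have "\<dots> < e" using that(1,2) by (fastforce simp: abs_less_iff)
    finally show ?thesis .
  qed
  have "\<exists>K. \<forall>m\<ge>K. \<forall>n\<ge>K. N (?A m - ?A n) < e" if "e > 0" for e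
  proof -
    obtain K where K: "\<forall>m\<ge>K. \<forall>n. norm (\<Sum>k=m..<n. N (c k)) < e"
      using summable_Cauchy[THEN iffD1, OF sm] \<open>e > 0\<close> by blast
    have "N (?A m - ?A n) < e" if "K \<le> m" "K \<le> n" for m n
    proof (cases "n \<le> m")
      case False
      then have "N (?A n - ?A m) < e" using cauchy_le[OF K] that by simp
      then show ?thesis using norm_minus_commute[OF A_mem A_mem] by metis
    qed (use cauchy_le[OF K] that in simp)
    then show ?thesis by blast
  qed
  then obtain L where "L \<in> S" "(\<lambda>k. N (?A k - L)) \<longlonglongrightarrow> 0"
    using cauchy_converges[of ?A, OF A_mem] by blast
  then show ?thesis using norm_minus_commute[OF _ A_mem] by (intro bexI[of _ L]) simp_all
qed

end

text \<open>The sum of a series in a Banach space, when it exists; elsewhere an unspecified value.\<close>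
definition series_sum :: "'v::cnormed set \<Rightarrow> ('v \<Rightarrow> real) \<Rightarrow> (nat \<Rightarrow> 'v) \<Rightarrow> 'v" where
  "series_sum S N c = (SOME L. L \<in> S \<and> (\<lambda>M. N (L - (\<Sum>k<M. c k))) \<longlonglongrightarrow> 0)"

context cbanach_space
begin

lemma series_sum_eqI:
  assumes "\<And>k. c k \<in> S" "L \<in> S" "(\<lambda>M. N (L - (\<Sum>k<M. c k))) \<longlonglongrightarrow> 0"
  shows "series_sum S N c = L"
proof -
  have "\<exists>L. L \<in> S \<and> (\<lambda>M. N (L - (\<Sum>k<M. c k))) \<longlonglongrightarrow> 0" using assms(2,3) by blast
  from someI_ex[OF this] show ?thesis
    unfolding series_sum_def using assms by (intro limit_unique) (auto intro: sum_mem)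
qed

lemma series_sum:
  assumes "\<And>k. c k \<in> S" "summable (\<lambda>k. N (c k))"
  shows "series_sum S N c \<in> S" "(\<lambda>M. N (series_sum S N c - (\<Sum>k<M. c k))) \<longlonglongrightarrow> 0"
  using series_sum_eqI[OF assms(1)] absolutely_summable_converges[OF assms] by auto

lemma series_sum_diff:
  assumes "\<And>k. c k \<in> S" "\<And>k. d k \<in> S" "summable (\<lambda>k. N (c k))" "summable (\<lambda>k. N (d k))"
  shows "series_sum S N (\<lambda>k. c k - d k) = series_sum S N c - series_sum S N d"
proof (rule series_sum_eqI)
  note c = series_sum[OF assms(1,3)] and d = series_sum[OF assms(2,4)]
  show "series_sum S N c - series_sum S N d \<in> S" using c d by (simp add: diff_mem)
  show "(\<lambda>M. N (series_sum S N c - series_sum S N d - (\<Sum>k<M. c k - d k))) \<longlonglongrightarrow> 0"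
  proof (rule norm_tendsto_zeroI)
    fix M
    have "series_sum S N c - series_sum S N d - (\<Sum>k<M. c k - d k)
        = (series_sum S N c - (\<Sum>k<M. c k)) - (series_sum S N d - (\<Sum>k<M. d k))"
      by (simp add: sum_subtractf algebra_simps)
    moreover have "series_sum S N c - (\<Sum>k<M. c k) \<in> S" "series_sum S N d - (\<Sum>k<M. d k) \<in> S"
      using c d assms by (auto intro!: diff_mem sum_mem)
    ultimately show "series_sum S N c - series_sum S N d - (\<Sum>k<M. c k - d k) \<in> S"
      "N (series_sum S N c - series_sum S N d - (\<Sum>k<M. c k - d k))
         \<le> N (series_sum S N c - (\<Sum>k<M. c k)) + N (series_sum S N d - (\<Sum>k<M. d k))"
      by (metis diff_mem, metis norm_diff_le)
  qed (use tendsto_add[OF c(2) d(2)] in simp)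
qed (use assms in \<open>simp add: diff_mem\<close>)

lemma series_sum_scale:
  assumes "\<And>k. c k \<in> S" "summable (\<lambda>k. N (c k))"
  shows "series_sum S N (\<lambda>k. scaleCx a (c k)) = scaleCx a (series_sum S N c)"
proof (rule series_sum_eqI)
  note c = series_sum[OF assms]
  show "scaleCx a (series_sum S N c) \<in> S" using c by (simp add: scale_mem)
  have "N (scaleCx a (series_sum S N c) - (\<Sum>k<M. scaleCx a (c k)))
      = cmod a * N (series_sum S N c - (\<Sum>k<M. c k))" for M
    using c assms norm_scale[of "series_sum S N c - (\<Sum>k<M. c k)" a]
    by (simp add: scaleCx_diff_right diff_mem sum_mem flip: scaleCx_sum_right)
  then show "(\<lambda>M. N (scaleCx a (series_sum S N c) - (\<Sum>k<M. scaleCx a (c k)))) \<longlonglongrightarrow> 0"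
    using tendsto_mult_right_zero[OF c(2)] by simp
qed (use assms in \<open>simp add: scale_mem\<close>)

lemma norm_series_sum_le:
  assumes "\<And>k. c k \<in> S" "summable (\<lambda>k. N (c k))"
  shows "N (series_sum S N c) \<le> (\<Sum>k. N (c k))"
proof (rule limit_norm_le[OF series_sum(1)[OF assms] _ series_sum(2)[OF assms]])
  show "N (\<Sum>k<M. c k) \<le> (\<Sum>k. N (c k))" for M
    using norm_sum_le[of "{..<M}" c] sum_le_suminf[OF assms(2), of "{..<M}"] assms norm_nonneg
    by fastforce
qed (use assms in \<open>auto intro: sum_mem\<close>)

end

lemma summable_square_times_geometric:
  fixes q :: real
  assumes "0 \<le> q" "q < 1"
  shows "summable (\<lambda>k. (real k + 1)^2 * q^k)"
proof -
  define t where "t = root 3 q"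
  have t: "0 \<le> t" "t < 1" "t^3 = q"
    using assms by (auto simp: t_def real_root_pow_pos2)
  have "(\<lambda>k. of_nat k * t^k + t^k) \<longlonglongrightarrow> 0 + 0"
    using t by (intro tendsto_add powser_times_n_limit_0 LIMSEQ_power_zero) auto
  then have "Bseq (\<lambda>k. (real k + 1) * t^k)"
    by (intro convergent_imp_Bseq convergentI) (simp add: algebra_simps)
  then obtain B where B: "\<And>k. norm ((real k + 1) * t^k) \<le> B" by (meson BseqE)
  show ?thesis
  proof (rule summable_comparison_test'[where N=0])
    show "summable (\<lambda>k. B^2 * t^k)" using t by (intro summable_mult summable_geometric) simp
    fix k :: nat
    have "q^k = (t^k)^2 * t^k"
    proof -
      have "(t^k)^2 * t^k = t^(k + k + k)" by (simp add: power2_eq_square power_add)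
      also have "k + k + k = 3 * k" by simp
      finally show ?thesis by (simp add: power_mult t(3))
    qed
    then have "(real k + 1)^2 * q^k = ((real k + 1) * t^k)^2 * t^k"
      by (simp add: power_mult_distrib)
    also have "\<dots> \<le> B^2 * t^k"
      using B[of k] t by (intro mult_right_mono power_mono) (auto simp: abs_le_iff)
    finally show "norm ((real k + 1)^2 * q^k) \<le> B^2 * t^k" using assms by simp
  qed
qed

context cbanach_space
begin

lemma summable_weighted_norms:
  assumes c: "\<And>k. c k \<in> S" "\<And>k. N (c k) \<le> K * r^k" and rR: "0 \<le> r" "0 \<le> R" "R * r < 1"
    and g: "\<And>k. \<bar>g k\<bar> \<le> C * (real k + 1)^2 * R^k"
  shows "summable (\<lambda>k. g k * N (c k))"
proof (rule summable_comparison_test'[where N=0])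
  show "summable (\<lambda>k. C * K * ((real k + 1)^2 * (R * r)^k))"
    using rR by (intro summable_mult summable_square_times_geometric) auto
  fix k :: nat
  have "norm (g k * N (c k)) = \<bar>g k\<bar> * N (c k)"
    using norm_nonneg[OF c(1)] by (simp add: abs_mult)
  also have "\<dots> \<le> (C * (real k + 1)^2 * R^k) * (K * r^k)"
    using g[of k] c norm_nonneg by (intro mult_mono) (auto intro: order_trans[OF abs_ge_zero])
  also have "\<dots> = C * K * ((real k + 1)^2 * (R * r)^k)"
    by (simp add: power_mult_distrib)
  finally show "norm (g k * N (c k)) \<le> C * K * ((real k + 1)^2 * (R * r)^k)" .
qed

lemma summable_scaled_norms:
  assumes c: "\<And>k. c k \<in> S" "\<And>k. N (c k) \<le> K * r^k" and rR: "0 \<le> r" "0 \<le> R" "R * r < 1"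
    and a: "\<And>k. cmod (a k) \<le> C * (real k + 1)^2 * R^k"
  shows "summable (\<lambda>k. N (scaleCx (a k) (c k)))"
  using summable_weighted_norms[OF c rR, of "\<lambda>k. cmod (a k)" C] a
  by (simp add: norm_scale[OF c(1)])

lemma series_sum_linear_combination:
  assumes c: "\<And>k. c k \<in> S"
    and sm: "summable (\<lambda>k. N (scaleCx (\<alpha> k) (c k)))" "summable (\<lambda>k. N (scaleCx (\<beta> k) (c k)))"
      "summable (\<lambda>k. N (scaleCx (\<gamma> k) (c k)))"
  shows "scaleCx a (series_sum S N (\<lambda>k. scaleCx (\<alpha> k) (c k)) - series_sum S N (\<lambda>k. scaleCx (\<beta> k) (c k)))
           - series_sum S N (\<lambda>k. scaleCx (\<gamma> k) (c k))
         = series_sum S N (\<lambda>k. scaleCx (a * (\<alpha> k - \<beta> k) - \<gamma> k) (c k))"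
proof -
  let ?ser = "\<lambda>a. series_sum S N (\<lambda>k. scaleCx (a k) (c k))"
  have mem: "scaleCx x (c k) \<in> S" for x k by (rule scale_mem[OF c])
  have sm_diff: "summable (\<lambda>k. N (scaleCx (\<alpha> k - \<beta> k) (c k)))"
  proof (rule summable_comparison_test'[OF summable_add[OF sm(1,2)], where N=0])
    show "norm (N (scaleCx (\<alpha> k - \<beta> k) (c k))) \<le> N (scaleCx (\<alpha> k) (c k)) + N (scaleCx (\<beta> k) (c k))" for k
      using norm_diff_le[OF mem mem] norm_nonneg[OF diff_mem[OF mem mem]]
      by (simp add: scaleCx_diff_left)
  qed
  have sm_scaled: "summable (\<lambda>k. N (scaleCx (a * (\<alpha> k - \<beta> k)) (c k)))"
    using summable_mult[OF sm_diff, of "cmod a"]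
    by (simp add: norm_scale[OF mem] flip: scaleCx_scaleCx)
  have "?ser (\<lambda>k. a * (\<alpha> k - \<beta> k) - \<gamma> k) = ?ser (\<lambda>k. a * (\<alpha> k - \<beta> k)) - ?ser \<gamma>"
    unfolding scaleCx_diff_left by (rule series_sum_diff[OF mem mem sm_scaled sm(3)])
  also have "?ser (\<lambda>k. a * (\<alpha> k - \<beta> k)) = scaleCx a (?ser (\<lambda>k. \<alpha> k - \<beta> k))"
    unfolding scaleCx_scaleCx[symmetric] by (rule series_sum_scale[OF mem sm_diff])
  also have "?ser (\<lambda>k. \<alpha> k - \<beta> k) = ?ser \<alpha> - ?ser \<beta>"
    unfolding scaleCx_diff_left by (rule series_sum_diff[OF mem mem sm(1,2)])
  finally show ?thesis by simp
qed

text \<open>Termwise differentiation of a series \<open>\<Sum> \<phi>\<^sub>k(z) c\<^sub>k\<close>, quantitatively: a second-order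
  remainder bound for each \<open>\<phi>\<^sub>k\<close> gives a Lipschitz bound on the difference quotient.\<close>
lemma series_diff_quotient_le:
  fixes \<phi> :: "nat \<Rightarrow> complex \<Rightarrow> complex" and \<psi> :: "nat \<Rightarrow> complex"
  assumes c: "\<And>k. c k \<in> S" "\<And>k. N (c k) \<le> K * r^k" and rR: "0 \<le> r" "0 \<le> R" "R * r < 1"
    and \<phi>: "\<And>k. cmod (\<phi> k w) \<le> C * (real k + 1)^2 * R^k" "\<And>k. cmod (\<phi> k z) \<le> C * (real k + 1)^2 * R^k"
    and \<psi>: "\<And>k. cmod (\<psi> k) \<le> C * (real k + 1)^2 * R^k"
    and rem: "\<And>k. cmod (\<phi> k w - \<phi> k z - \<psi> k * (w - z)) \<le> C * (real k + 1)^2 * R^k * cmod (w - z)^2"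
    and "w \<noteq> z"
  shows "N (scaleCx (inverse (w - z)) (series_sum S N (\<lambda>k. scaleCx (\<phi> k w) (c k))
              - series_sum S N (\<lambda>k. scaleCx (\<phi> k z) (c k)))
           - series_sum S N (\<lambda>k. scaleCx (\<psi> k) (c k)))
         \<le> cmod (w - z) * (\<Sum>k. C * (real k + 1)^2 * R^k * N (c k))"
proof -
  define d where "d = w - z"
  have d: "d \<noteq> 0" using \<open>w \<noteq> z\<close> by (simp add: d_def)
  let ?G = "\<lambda>k. C * (real k + 1)^2 * R^k"
  let ?ser = "\<lambda>a. series_sum S N (\<lambda>k. scaleCx (a k) (c k))"
  have sm: "summable (\<lambda>k. N (scaleCx (a k) (c k)))" if "\<And>k. cmod (a k) \<le> M * ?G k" for a M
    using summable_scaled_norms[OF c rR, of a "M * C"] that by (simp add: mult.assoc)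
  have G_nonneg: "0 \<le> ?G k" for k using \<psi>[of k] norm_ge_zero order_trans by blast
  have sm_G: "summable (\<lambda>k. ?G k * N (c k))"
    using G_nonneg by (intro summable_weighted_norms[OF c rR, of _ C]) simp
  define \<theta> where "\<theta> k = inverse d * (\<phi> k w - \<phi> k z) - \<psi> k" for k
  have \<theta>: "cmod (\<theta> k) \<le> cmod d * ?G k" for k
  proof -
    have "\<theta> k = inverse d * (\<phi> k w - \<phi> k z - \<psi> k * d)" using d by (simp add: \<theta>_def field_simps)
    then have "cmod (\<theta> k) = cmod (\<phi> k w - \<phi> k z - \<psi> k * d) / cmod d"
      by (simp add: norm_mult norm_inverse divide_inverse)
    also have "\<dots> \<le> ?G k * cmod d ^ 2 / cmod d"
      using rem[of k] by (simp add: d_def divide_right_mono)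
    finally show ?thesis using d by (simp add: power2_eq_square mult_ac)
  qed
  have "scaleCx (inverse d) (?ser (\<lambda>k. \<phi> k w) - ?ser (\<lambda>k. \<phi> k z)) - ?ser \<psi> = ?ser \<theta>"
    unfolding \<theta>_def using \<phi> \<psi> by (intro series_sum_linear_combination c(1) sm[of _ 1]) auto
  then have "N (scaleCx (inverse d) (?ser (\<lambda>k. \<phi> k w) - ?ser (\<lambda>k. \<phi> k z)) - ?ser \<psi>) = N (?ser \<theta>)"
    by simp
  also have "\<dots> \<le> (\<Sum>k. N (scaleCx (\<theta> k) (c k)))"
    using \<theta> by (intro norm_series_sum_le scale_mem[OF c(1)] sm)
  also have "\<dots> \<le> (\<Sum>k. cmod d * (?G k * N (c k)))"
  proof (rule suminf_le)
    show "N (scaleCx (\<theta> k) (c k)) \<le> cmod d * (?G k * N (c k))" for k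
      using mult_right_mono[OF \<theta>[of k] norm_nonneg[OF c(1)]] by (simp add: norm_scale[OF c(1)] mult_ac)
    show "summable (\<lambda>k. N (scaleCx (\<theta> k) (c k)))" using \<theta> by (rule sm)
    show "summable (\<lambda>k. cmod d * (?G k * N (c k)))" using sm_G by (rule summable_mult)
  qed
  also have "\<dots> = cmod d * (\<Sum>k. ?G k * N (c k))" using sm_G by (rule suminf_mult)
  finally show ?thesis by (simp add: d_def)
qed

end

lemma power_remainder_le:
  fixes w z :: complex
  assumes \<rho>: "0 < \<rho>" and w: "cmod w \<le> \<rho>" and z: "cmod z \<le> \<rho>"
  shows "\<rho>^2 * cmod (w^k - z^k - of_nat k * z^(k-1) * (w - z)) \<le> (real k)^2 * \<rho>^k * cmod (w - z)^2"
proof (induction k)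
  case (Suc k)
  show ?case
  proof (cases k)
    case (Suc j)
    let ?E = "\<lambda>k. w^k - z^k - of_nat k * z^(k-1) * (w - z)"
    have split: "?E (Suc k) = w * ?E k + of_nat k * z^j * (w - z)^2"
      unfolding Suc by (simp add: algebra_simps power2_eq_square)
    have "cmod (?E (Suc k)) \<le> cmod w * cmod (?E k) + real k * cmod z ^ j * cmod (w - z)^2"
      unfolding split by (rule order_trans[OF norm_triangle_ineq]) (simp add: norm_mult norm_power)
    also have "\<dots> \<le> \<rho> * cmod (?E k) + real k * \<rho> ^ j * cmod (w - z)^2"
      using w z by (intro add_mono mult_right_mono mult_left_mono power_mono) auto
    finally have "\<rho>^2 * cmod (?E (Suc k)) \<le> \<rho>^2 * (\<rho> * cmod (?E k) + real k * \<rho> ^ j * cmod (w - z)^2)"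
      using \<rho> by (simp add: mult_left_mono)
    also have "\<dots> = \<rho> * (\<rho>^2 * cmod (?E k)) + real k * \<rho>^(Suc k) * cmod (w - z)^2"
      unfolding Suc by (simp add: algebra_simps power2_eq_square)
    also have "\<dots> \<le> \<rho> * ((real k)^2 * \<rho>^k * cmod (w - z)^2) + real k * \<rho>^(Suc k) * cmod (w - z)^2"
      using Suc.IH \<rho> by simp
    also have "\<dots> = ((real k)^2 + real k) * \<rho>^(Suc k) * cmod (w - z)^2"
      by (simp add: algebra_simps)
    also have "\<dots> \<le> (real (Suc k))^2 * \<rho>^(Suc k) * cmod (w - z)^2"
      using \<rho> by (intro mult_right_mono) (auto simp: power2_eq_square algebra_simps)
    finally show ?thesis .
  qed (use \<rho> in simp)
qed simp

text \<open>The same estimate for \<open>x \<mapsto> x\<^sup>-\<^sup>m\<close>, obtained from the one for powers through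
  \<open>u = 1/w\<close>, \<open>v = 1/z\<close> and \<open>u - v = -(w - z) u v\<close>.\<close>
lemma inverse_power_remainder_le:
  fixes w z :: complex
  assumes w: "w \<noteq> 0" "cmod (inverse w) \<le> \<rho>" and z: "z \<noteq> 0" "cmod (inverse z) \<le> \<rho>"
    and \<rho>: "0 < \<rho>" "\<rho> \<le> 1"
  shows "cmod (inverse w ^ Suc k - inverse z ^ Suc k - (- (of_nat (Suc k) * inverse z ^ (k+2))) * (w - z))
         \<le> 2 * (real k + 1)^2 * \<rho>^k * cmod (w - z)^2"
proof -
  define u where "u = inverse w"
  define v where "v = inverse z"
  define m where "m = Suc k"
  define d where "d = w - z"
  have u: "cmod u \<le> \<rho>" and v: "cmod v \<le> \<rho>" using w z by (auto simp: u_def v_def)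
  define E where "E = u^m - v^m - of_nat m * v^(m-1) * (u - v)"
  have v2d: "v^2 * d = v - u + v^2 * u * d^2"
    unfolding u_def v_def d_def using w z by (simp add: field_simps power2_eq_square)
  have split: "u ^ m - v ^ m - (- (of_nat m * v ^ (k+2))) * d = E + of_nat m * v^(k+2) * u * d^2"
  proof -
    have "u ^ m - v ^ m - (- (of_nat m * v ^ (k+2))) * d = u ^ m - v ^ m + of_nat m * v^k * (v^2 * d)"
      by (simp add: power_add algebra_simps power2_eq_square)
    also have "\<dots> = E + of_nat m * v^(k+2) * u * d^2"
      unfolding v2d E_def m_def by (simp add: power_add algebra_simps power2_eq_square)
    finally show ?thesis .
  qed
  have "cmod (u - v) \<le> cmod d * \<rho>^2"
  proof -
    have "u - v = - d * u * v" unfolding u_def v_def d_def using w z by (simp add: field_simps)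
    then have "cmod (u - v) = cmod d * (cmod u * cmod v)" by (simp add: norm_mult)
    also have "\<dots> \<le> cmod d * (\<rho> * \<rho>)" using u v \<rho> by (intro mult_left_mono mult_mono) auto
    finally show ?thesis by (simp add: power2_eq_square)
  qed
  then have uv2: "cmod (u - v)^2 \<le> cmod d^2 * \<rho>^4"
    using power_mono[of "cmod (u - v)" "cmod d * \<rho>^2" 2]
    by (simp add: power_mult_distrib flip: power_mult)
  have "\<rho>^2 * cmod E \<le> (real m)^2 * \<rho>^m * cmod (u - v)^2"
    unfolding E_def by (rule power_remainder_le[OF \<rho>(1) u v])
  also have "\<dots> \<le> (real m)^2 * \<rho>^m * (cmod d^2 * \<rho>^4)"
    using uv2 \<rho> by (intro mult_left_mono) auto
  also have "\<dots> = \<rho>^2 * ((real m)^2 * \<rho>^(k+3) * cmod d^2)"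
  proof -
    have "\<rho>^m * \<rho>^4 = \<rho>^2 * \<rho>^(k+3)"
      unfolding m_def power_add[symmetric] by (simp add: add.commute)
    then show ?thesis by (simp add: algebra_simps)
  qed
  finally have E: "cmod E \<le> (real m)^2 * \<rho>^(k+3) * cmod d^2"
    using \<rho> by simp
  have "cmod (of_nat m * v^(k+2) * u * d^2) = real m * (cmod v^(k+2) * cmod u) * cmod d^2"
    by (simp add: norm_mult norm_power)
  also have "\<dots> \<le> real m * (\<rho>^(k+2) * \<rho>) * cmod d^2"
    using u v \<rho> by (intro mult_right_mono mult_left_mono mult_mono power_mono) auto
  also have "\<rho>^(k+2) * \<rho> = \<rho>^(k+3)" by (simp add: power_add power3_eq_cube mult_ac)
  finally have R: "cmod (of_nat m * v^(k+2) * u * d^2) \<le> real m * \<rho>^(k+3) * cmod d^2" .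
  have "cmod (u ^ m - v ^ m - (- (of_nat m * v ^ (k+2))) * d)
      \<le> cmod E + cmod (of_nat m * v^(k+2) * u * d^2)"
    unfolding split by (rule norm_triangle_ineq)
  also have "\<dots> \<le> ((real m)^2 + real m) * \<rho>^(k+3) * cmod d^2"
    using E R by (simp add: algebra_simps)
  also have "\<dots> \<le> 2 * (real k + 1)^2 * \<rho>^k * cmod d^2"
  proof (intro mult_right_mono mult_mono)
    show "\<rho>^(k+3) \<le> \<rho>^k" using \<rho> by (intro power_decreasing) auto
  qed (use \<rho> in \<open>auto simp: m_def power2_eq_square algebra_simps\<close>)
  finally show ?thesis unfolding u_def v_def d_def m_def by simp
qed

lemma sum_int_interval_split:
  fixes g :: "int \<Rightarrow> 'a::comm_monoid_add"
  shows "(\<Sum>n\<in>{-int N..int M}. g n) = (\<Sum>k<N. g (-int (Suc k))) + (\<Sum>k<Suc M. g (int k))"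
proof (induction N)
  case 0
  have "(\<Sum>n\<in>{0..int M}. g n) = (\<Sum>k\<in>{0..M}. g (int k))"
    by (rule sum.reindex_cong[where l=int]) (auto simp: image_int_atLeastAtMost)
  then show ?case by (simp add: atLeast0AtMost lessThan_Suc_atMost)
next
  case (Suc N)
  have "{-int (Suc N)..int M} = insert (-int (Suc N)) {-int N..int M}" by auto
  then show ?case using Suc by (simp add: add_ac)
qed

section \<open>The sum space of a couple\<close>

locale cbanach_couple = B0: cbanach_space B0 N0 + B1: cbanach_space B1 N1
  for B0 :: "'v::cnormed set" and N0 and B1 :: "'v set" and N1
begin

lemma sum_space_add_mem: "a \<in> B0 \<Longrightarrow> c \<in> B1 \<Longrightarrow> a + c \<in> sum_space B0 B1"
  unfolding sum_space_def by blast

lemma sum_norm_add_le: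
  assumes "a \<in> B0" "c \<in> B1"
  shows "sum_norm B0 N0 B1 N1 (a + c) \<le> N0 a + N1 c"
  unfolding sum_norm_def using assms
  by (intro cInf_lower bdd_belowI[of _ 0]) (auto intro!: add_nonneg_nonneg B0.norm_nonneg B1.norm_nonneg)

lemma norm_le_sum_norm:
  assumes c0: "\<forall>x\<in>B0. norm x \<le> c0 * N0 x" and c1: "\<forall>x\<in>B1. norm x \<le> c1 * N1 x"
    and v: "v \<in> sum_space B0 B1"
  shows "norm v \<le> max (max c0 c1) 1 * sum_norm B0 N0 B1 N1 v"
proof -
  define C where "C = max (max c0 c1) 1"
  have C: "0 < C" "c0 \<le> C" "c1 \<le> C" by (auto simp: C_def)
  have "norm v / C \<le> sum_norm B0 N0 B1 N1 v"
    unfolding sum_norm_def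
  proof (rule cInf_greatest)
    show "{N0 a + N1 b |a b. a \<in> B0 \<and> b \<in> B1 \<and> v = a + b} \<noteq> {}"
      using v unfolding sum_space_def by blast
    fix s assume "s \<in> {N0 a + N1 b |a b. a \<in> B0 \<and> b \<in> B1 \<and> v = a + b}"
    then obtain a c where ac: "a \<in> B0" "c \<in> B1" "v = a + c" "s = N0 a + N1 c" by blast
    have "norm v \<le> norm a + norm c" using ac by (simp add: norm_triangle_ineq)
    also have "\<dots> \<le> C * N0 a + C * N1 c"
      using c0 c1 C ac B0.norm_nonneg[OF ac(1)] B1.norm_nonneg[OF ac(2)]
      by (intro add_mono) (meson mult_right_mono order_trans)+
    finally show "norm v / C \<le> s" using C ac by (simp add: divide_le_eq algebra_simps)
  qed
  then show ?thesis using C by (simp add: C_def divide_le_eq mult.commute)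
qed

text \<open>Limits in \<open>B\<^sub>0 + B\<^sub>1\<close> are unique because both spaces embed continuously into the
  ambient normed space.\<close>
lemma zsum_conv_unique:
  assumes c0: "\<forall>x\<in>B0. norm x \<le> c0 * N0 x" and c1: "\<forall>x\<in>B1. norm x \<le> c1 * N1 x"
    and u: "\<And>n. u n \<in> B0"
    and x: "zsum_conv B0 N0 B1 N1 u x" and y: "zsum_conv B0 N0 B1 N1 u y"
  shows "x = y"
proof (rule ccontr)
  assume ne: "x \<noteq> y"
  define C where "C = max (max c0 c1) 1"
  have C: "0 < C" by (auto simp: C_def)
  define e where "e = norm (x - y) / (4 * C)"
  have e: "e > 0" using ne C by (simp add: e_def)
  obtain Kx where Kx: "\<forall>M\<ge>Kx. \<forall>N\<ge>Kx. sum_norm B0 N0 B1 N1 (x - (\<Sum>n\<in>{- int N..int M}. u n)) < e"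
    using x e unfolding zsum_conv_def by blast
  obtain Ky where Ky: "\<forall>M\<ge>Ky. \<forall>N\<ge>Ky. sum_norm B0 N0 B1 N1 (y - (\<Sum>n\<in>{- int N..int M}. u n)) < e"
    using y e unfolding zsum_conv_def by blast
  define K where "K = max Kx Ky"
  define S where "S = (\<Sum>n\<in>{- int K..int K}. u n)"
  have "S \<in> B0" unfolding S_def by (intro B0.sum_mem u)
  then have remainder_mem: "w - S \<in> sum_space B0 B1" if "w \<in> sum_space B0 B1" for w
    using that unfolding sum_space_def
    by clarsimp (metis B0.diff_mem add_diff_eq diff_add_eq)
  have xy: "x \<in> sum_space B0 B1" "y \<in> sum_space B0 B1" using x y unfolding zsum_conv_def by auto
  have "norm (x - y) \<le> norm (x - S) + norm (y - S)"
    using norm_triangle_ineq4[of "x - S" "y - S"] by simp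
  also have "\<dots> \<le> C * sum_norm B0 N0 B1 N1 (x - S) + C * sum_norm B0 N0 B1 N1 (y - S)"
    unfolding C_def using xy by (intro add_mono norm_le_sum_norm[OF c0 c1] remainder_mem)
  also have "\<dots> < C * e + C * e"
    using Kx Ky C unfolding S_def K_def by (intro add_strict_mono mult_strict_left_mono) auto
  also have "\<dots> = norm (x - y) / 2" using C by (simp add: e_def field_simps)
  finally show False using ne by simp
qed

lemma zsum_conv_add:
  assumes u0: "\<And>k. u (-int (Suc k)) \<in> B0" and u1: "\<And>k. u (int k) \<in> B1"
    and Q: "Q \<in> B0" "(\<lambda>M. N0 (Q - (\<Sum>k<M. u (-int (Suc k))))) \<longlonglongrightarrow> 0"
    and P: "P \<in> B1" "(\<lambda>M. N1 (P - (\<Sum>k<M. u (int k)))) \<longlonglongrightarrow> 0"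
  shows "zsum_conv B0 N0 B1 N1 u (Q + P)"
  unfolding zsum_conv_def
proof (intro conjI allI impI sum_space_add_mem Q P)
  fix e :: real assume "e > 0"
  have "\<exists>KQ. \<forall>N\<ge>KQ. N0 (Q - (\<Sum>k<N. u (-int (Suc k)))) < e/2"
    using order_tendstoD(2)[OF Q(2), of "e/2"] \<open>e > 0\<close> by (simp add: eventually_sequentially)
  then obtain KQ where KQ: "\<forall>N\<ge>KQ. N0 (Q - (\<Sum>k<N. u (-int (Suc k)))) < e/2" ..
  have "\<exists>KP. \<forall>M\<ge>KP. N1 (P - (\<Sum>k<M. u (int k))) < e/2"
    using order_tendstoD(2)[OF P(2), of "e/2"] \<open>e > 0\<close> by (simp add: eventually_sequentially)
  then obtain KP where KP: "\<forall>M\<ge>KP. N1 (P - (\<Sum>k<M. u (int k))) < e/2" ..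
  have "sum_norm B0 N0 B1 N1 (Q + P - (\<Sum>n\<in>{- int N..int M}. u n)) < e"
    if "max KQ KP \<le> M" "max KQ KP \<le> N" for M N
  proof -
    have eq: "Q + P - (\<Sum>n\<in>{- int N..int M}. u n)
        = (Q - (\<Sum>k<N. u (-int (Suc k)))) + (P - (\<Sum>k<Suc M. u (int k)))"
      by (simp only: sum_int_interval_split algebra_simps)
    have "sum_norm B0 N0 B1 N1 ((Q - (\<Sum>k<N. u (-int (Suc k)))) + (P - (\<Sum>k<Suc M. u (int k))))
        \<le> N0 (Q - (\<Sum>k<N. u (-int (Suc k)))) + N1 (P - (\<Sum>k<Suc M. u (int k)))"
      using Q(1) P(1) u0 u1 by (intro sum_norm_add_le B0.diff_mem B1.diff_mem B0.sum_mem B1.sum_mem)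
    also have "\<dots> < e/2 + e/2"
      using KQ KP that by (intro add_strict_mono) (auto simp del: sum.lessThan_Suc)
    finally show ?thesis unfolding eq by simp
  qed
  then show "\<exists>K. \<forall>M\<ge>K. \<forall>N\<ge>K. sum_norm B0 N0 B1 N1 (Q + P - (\<Sum>n\<in>{- int N..int M}. u n)) < e"
    by blast
qed

lemma sum_analytic_if_quotient_lipschitz:
  assumes mem: "\<And>z. z \<in> U \<Longrightarrow> f z \<in> sum_space B0 B1"
    and lip: "\<And>z. z \<in> U \<Longrightarrow> \<exists>d\<in>sum_space B0 B1. \<exists>C r. 0 < r \<and> (\<forall>w\<in>U. w \<noteq> z \<and> cmod (w - z) < r \<longrightarrow>
        sum_norm B0 N0 B1 N1 (scaleCx (inverse (w - z)) (f w - f z) - d) \<le> cmod (w - z) * C)"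
  shows "sum_analytic B0 N0 B1 N1 U f"
  unfolding sum_analytic_def
proof (intro conjI ballI mem)
  fix z assume "z \<in> U"
  then obtain d C r where d: "d \<in> sum_space B0 B1" and r: "0 < r"
    and bound: "\<And>w. w \<in> U \<Longrightarrow> w \<noteq> z \<Longrightarrow> cmod (w - z) < r \<Longrightarrow>
        sum_norm B0 N0 B1 N1 (scaleCx (inverse (w - z)) (f w - f z) - d) \<le> cmod (w - z) * C"
    using lip by meson
  have "\<exists>\<delta>>0. \<forall>w\<in>U. w \<noteq> z \<and> cmod (w - z) < \<delta> \<longrightarrow>
          sum_norm B0 N0 B1 N1 (scaleCx (inverse (w - z)) (f w - f z) - d) < e" if "e > 0" for e
  proof (intro exI[of _ "min r (e / (\<bar>C\<bar> + 1))"] conjI ballI impI)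
    show "0 < min r (e / (\<bar>C\<bar> + 1))" using r \<open>e > 0\<close> by simp
    fix w assume "w \<in> U" and w: "w \<noteq> z \<and> cmod (w - z) < min r (e / (\<bar>C\<bar> + 1))"
    have "cmod (w - z) * C \<le> cmod (w - z) * (\<bar>C\<bar> + 1)" by (intro mult_left_mono) auto
    also have "\<dots> < e / (\<bar>C\<bar> + 1) * (\<bar>C\<bar> + 1)"
      using w by (intro mult_strict_right_mono) auto
    finally show "sum_norm B0 N0 B1 N1 (scaleCx (inverse (w - z)) (f w - f z) - d) < e"
      using bound[OF \<open>w \<in> U\<close>] w by fastforce
  qed
  then show "\<exists>d\<in>sum_space B0 B1. \<forall>e>0. \<exists>\<delta>>0. \<forall>w\<in>U. w \<noteq> z \<and> cmod (w - z) < \<delta> \<longrightarrow>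
      sum_norm B0 N0 B1 N1 (scaleCx (inverse (w - z)) (f w - f z) - d) < e"
    using d by blast
qed

end

lemma le_square_succ_times: "0 \<le> (x::real) \<Longrightarrow> x \<le> (real k + 1)^2 * x"
  using mult_right_mono[of 1 "(real k + 1)^2" x] by (simp add: one_le_power)

lemma power_le_square_times_power:
  assumes "0 \<le> R" "cmod z \<le> R"
  shows "cmod (z ^ k) \<le> 1 * (real k + 1)^2 * R^k"
proof -
  have "cmod (z ^ k) \<le> R^k" using assms by (simp add: norm_power power_mono)
  also have "\<dots> \<le> (real k + 1)^2 * R^k" using assms by (intro le_square_succ_times) simp
  finally show ?thesis by simp
qed

lemma inverse_norm_bounds:
  assumes "R \<le> cmod z" "1 < R"
  shows "cmod (inverse z) \<le> inverse R" "inverse R < 1" "0 < inverse R"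
  using assms by (auto simp: norm_inverse le_imp_inverse_le inverse_less_1_iff)

lemma inverse_power_le_square_times_power:
  assumes R: "1 < R" "R \<le> cmod x" and "k \<le> j"
  shows "cmod (inverse x ^ j) \<le> 2 * (real k + 1)^2 * inverse R ^ k"
proof -
  note \<rho> = inverse_norm_bounds[OF R(2,1)]
  have "cmod (inverse x ^ j) \<le> inverse R ^ j" using \<rho> by (simp add: norm_power power_mono)
  also have "\<dots> \<le> inverse R ^ k" using \<rho> \<open>k \<le> j\<close> by (intro power_decreasing) auto
  also have "\<dots> \<le> (real k + 1)^2 * inverse R ^ k" using \<rho> by (intro le_square_succ_times) simp
  also have "\<dots> \<le> 2 * (real k + 1)^2 * inverse R ^ k" using \<rho> by simp
  finally show ?thesis .
qed

lemma power_deriv_le_square_times_power: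
  assumes "1 \<le> R" "cmod z \<le> R"
  shows "cmod (of_nat k * z ^ (k - 1)) \<le> 1 * (real k + 1)^2 * R^k"
proof -
  have "cmod (of_nat k * z ^ (k - 1)) \<le> real k * R ^ (k - 1)"
    using assms by (simp add: norm_mult norm_power mult_left_mono power_mono)
  also have "\<dots> \<le> (real k + 1)^2 * R^k"
    using assms self_le_power[of "real k + 1" 2] by (intro mult_mono power_increasing) auto
  finally show ?thesis by simp
qed

lemma inverse_power_deriv_le_square_times_power:
  assumes R: "1 < R" "R \<le> cmod z"
  shows "cmod (- (of_nat (Suc k) * inverse z ^ (k + 2))) \<le> 2 * (real k + 1)^2 * inverse R ^ k"
proof -
  note \<rho> = inverse_norm_bounds[OF R(2,1)]
  have "cmod (- (of_nat (Suc k) * inverse z ^ (k + 2))) = (real k + 1) * cmod (inverse z) ^ (k + 2)"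
    by (simp add: norm_mult norm_power del: of_nat_Suc)
  also have "\<dots> \<le> (real k + 1) * inverse R ^ (k + 2)"
    using \<rho> by (intro mult_left_mono power_mono) auto
  also have "\<dots> \<le> (real k + 1) * inverse R ^ k"
    using \<rho> by (intro mult_left_mono power_decreasing) auto
  also have "\<dots> \<le> 2 * (real k + 1)^2 * inverse R ^ k"
    using \<rho> by (intro mult_right_mono) (auto simp: power2_eq_square)
  finally show ?thesis .
qed

lemma power_remainder_le_square_times_power:
  fixes w z :: complex
  assumes R: "1 \<le> R" and wz: "cmod w \<le> R" "cmod z \<le> R"
  shows "cmod (w ^ k - z ^ k - of_nat k * z ^ (k - 1) * (w - z)) \<le> 1 * (real k + 1)^2 * R^k * cmod (w - z)^2"
proof -
  have "R^2 * cmod (w ^ k - z ^ k - of_nat k * z ^ (k - 1) * (w - z)) \<le> (real k)^2 * R^k * cmod (w - z)^2"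
    using R wz by (intro power_remainder_le) auto
  also have "\<dots> \<le> R^2 * ((real k + 1)^2 * R^k * cmod (w - z)^2)"
  proof -
    have "(real k)^2 \<le> (real k + 1)^2" by (intro power_mono) auto
    also have "\<dots> \<le> R^2 * (real k + 1)^2"
      using R mult_right_mono[of 1 "R^2" "(real k + 1)^2"] by (simp add: one_le_power)
    finally have k2: "(real k)^2 \<le> R^2 * (real k + 1)^2" .
    have "0 \<le> R^k * cmod (w - z)^2" using R by simp
    from mult_right_mono[OF k2 this] show ?thesis by (simp add: mult_ac)
  qed
  finally show ?thesis using R by simp
qed

section \<open>Laurent series with coefficients in the intersection\<close>

text \<open>The coefficient bounds are those of a sequence \<open>b \<in> \<J>\<close>: \<open>N\<^sub>0(b\<^sub>n) \<le> \<parallel>b\<parallel>\<^sub>\<X>\<^sub>0\<close> and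
  \<open>e\<^sup>n N\<^sub>1(b\<^sub>n) \<le> \<parallel>{e\<^sup>n b\<^sub>n}\<parallel>\<^sub>\<X>\<^sub>1\<close>.\<close>
locale laurent_coeffs = cbanach_couple B0 N0 B1 N1
  for B0 :: "'v::cnormed set" and N0 and B1 :: "'v set" and N1 +
  fixes b :: "int \<Rightarrow> 'v" and K0 K1 :: real
  assumes coeff_mem0: "\<And>n. b n \<in> B0" and coeff_mem1: "\<And>n. b n \<in> B1"
    and coeff_norm0_le: "\<And>n. N0 (b n) \<le> K0"
    and coeff_norm1_le: "\<And>k. N1 (b (int k)) \<le> K1 * inverse (exp 1) ^ k"
begin

abbreviation regular_series :: "(nat \<Rightarrow> complex) \<Rightarrow> 'v" where
  "regular_series a \<equiv> series_sum B1 N1 (\<lambda>k. scaleCx (a k) (b (int k)))"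

abbreviation principal_series :: "(nat \<Rightarrow> complex) \<Rightarrow> 'v" where
  "principal_series a \<equiv> series_sum B0 N0 (\<lambda>k. scaleCx (a k) (b (- int (Suc k))))"

lemma principal_coeff_norm_le: "N0 (b (- int (Suc k))) \<le> K0 * 1 ^ k"
  using coeff_norm0_le by simp

lemma regular_series:
  assumes R: "0 \<le> R" "R < exp 1" and a: "\<And>k. cmod (a k) \<le> C * (real k + 1)^2 * R^k"
  shows "regular_series a \<in> B1"
    "(\<lambda>M. N1 (regular_series a - (\<Sum>k<M. scaleCx (a k) (b (int k))))) \<longlonglongrightarrow> 0"
proof -
  have "R * inverse (exp 1) < 1" using R by (simp add: field_simps)
  from B1.series_sum[OF B1.scale_mem[OF coeff_mem1]
      B1.summable_scaled_norms[OF coeff_mem1 coeff_norm1_le _ R(1) this a]]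
  show "regular_series a \<in> B1"
    "(\<lambda>M. N1 (regular_series a - (\<Sum>k<M. scaleCx (a k) (b (int k))))) \<longlonglongrightarrow> 0"
    by auto
qed

lemma principal_series:
  assumes R: "0 \<le> R" "R < 1" and a: "\<And>k. cmod (a k) \<le> C * (real k + 1)^2 * R^k"
  shows "principal_series a \<in> B0"
    "(\<lambda>M. N0 (principal_series a - (\<Sum>k<M. scaleCx (a k) (b (- int (Suc k)))))) \<longlonglongrightarrow> 0"
  using B0.series_sum[OF B0.scale_mem[OF coeff_mem0]
      B0.summable_scaled_norms[OF coeff_mem0 principal_coeff_norm_le _ R(1) _ a]] R
  by auto

definition laurent :: "complex \<Rightarrow> 'v" where
  "laurent z = principal_series (\<lambda>k. inverse z ^ Suc k) + regular_series (\<lambda>k. z ^ k)"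

lemma laurent_zsum_conv:
  assumes "z \<in> annulus"
  shows "zsum_conv B0 N0 B1 N1 (\<lambda>n. scaleCx (z powi n) (b n)) (laurent z)"
proof -
  have z: "1 < cmod z" "cmod z < exp 1" using assms by (auto simp: annulus_def)
  have powi: "z powi (- int (Suc k)) = inverse z ^ Suc k" for k
    by (simp only: power_int_minus power_int_of_nat power_inverse)
  have "cmod (inverse z ^ Suc k) \<le> 2 * (real k + 1)^2 * inverse (cmod z) ^ k" for k
    by (rule inverse_power_le_square_times_power[OF z(1) order_refl]) simp
  note principal = principal_series[OF _ _ this]
    and regular = regular_series[OF _ z(2) power_le_square_times_power[OF _ order_refl]]
  show ?thesis
    unfolding laurent_def
    by (rule zsum_conv_add; (unfold powi power_int_of_nat)?)
      (use principal regular inverse_norm_bounds[OF order_refl z(1)] in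
        \<open>auto simp: coeff_mem0 coeff_mem1 B0.scale_mem B1.scale_mem\<close>)
qed

lemma regular_quotient_le:
  assumes R: "1 \<le> R" "R < exp 1" and wz: "cmod w \<le> R" "cmod z \<le> R" "w \<noteq> z"
  shows "N1 (scaleCx (inverse (w - z)) (regular_series (\<lambda>k. w ^ k) - regular_series (\<lambda>k. z ^ k))
           - regular_series (\<lambda>k. of_nat k * z ^ (k - 1)))
         \<le> cmod (w - z) * (\<Sum>k. 1 * (real k + 1)^2 * R^k * N1 (b (int k)))"
proof (rule B1.series_diff_quotient_le[OF coeff_mem1 coeff_norm1_le])
  show "R * inverse (exp 1) < 1" using R by (simp add: field_simps)
  show "cmod (w ^ k) \<le> 1 * (real k + 1)^2 * R^k" "cmod (z ^ k) \<le> 1 * (real k + 1)^2 * R^k" for k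
    by (rule power_le_square_times_power; use R wz in simp)+
  show "cmod (of_nat k * z ^ (k - 1)) \<le> 1 * (real k + 1)^2 * R^k" for k
    using R(1) wz(2) by (rule power_deriv_le_square_times_power)
  show "cmod (w ^ k - z ^ k - of_nat k * z ^ (k - 1) * (w - z)) \<le> 1 * (real k + 1)^2 * R^k * cmod (w - z)^2"
    for k using R(1) wz(1,2) by (rule power_remainder_le_square_times_power)
qed (use R wz in auto)

lemma principal_quotient_le:
  assumes R: "1 < R" and wz: "R \<le> cmod w" "R \<le> cmod z" "w \<noteq> z"
  shows "N0 (scaleCx (inverse (w - z)) (principal_series (\<lambda>k. inverse w ^ Suc k)
              - principal_series (\<lambda>k. inverse z ^ Suc k))
           - principal_series (\<lambda>k. - (of_nat (Suc k) * inverse z ^ (k + 2))))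
         \<le> cmod (w - z) * (\<Sum>k. 2 * (real k + 1)^2 * inverse R ^ k * N0 (b (- int (Suc k))))"
proof (rule B0.series_diff_quotient_le[OF coeff_mem0 principal_coeff_norm_le])
  note \<rho> = inverse_norm_bounds[OF _ R]
  show "0 \<le> inverse R" "inverse R * 1 < 1" using \<rho>[OF wz(1)] by auto
  show "cmod (inverse w ^ Suc k) \<le> 2 * (real k + 1)^2 * inverse R ^ k"
    "cmod (inverse z ^ Suc k) \<le> 2 * (real k + 1)^2 * inverse R ^ k" for k
    by (rule inverse_power_le_square_times_power; use R wz in simp)+
  show "cmod (- (of_nat (Suc k) * inverse z ^ (k + 2))) \<le> 2 * (real k + 1)^2 * inverse R ^ k" for k
    using R wz(2) by (rule inverse_power_deriv_le_square_times_power)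
  show "cmod (inverse w ^ Suc k - inverse z ^ Suc k - - (of_nat (Suc k) * inverse z ^ (k + 2)) * (w - z))
      \<le> 2 * (real k + 1)^2 * inverse R ^ k * cmod (w - z)^2" for k
    using \<rho>[OF wz(1)] \<rho>[OF wz(2)] R wz by (intro inverse_power_remainder_le) auto
qed (use wz in auto)

lemma laurent_analytic: "sum_analytic B0 N0 B1 N1 annulus laurent"
proof (rule sum_analytic_if_quotient_lipschitz)
  fix z assume "z \<in> annulus"
  then show "laurent z \<in> sum_space B0 B1"
    using laurent_zsum_conv unfolding zsum_conv_def by blast
  have z: "1 < cmod z" "cmod z < exp 1" using \<open>z \<in> annulus\<close> by (auto simp: annulus_def)
  define r where "r = min (cmod z - 1) (exp 1 - cmod z) / 2"
  define R1 where "R1 = cmod z - r"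
  define R2 where "R2 = cmod z + r"
  have r: "0 < r" "r \<le> (cmod z - 1) / 2" "r \<le> (exp 1 - cmod z) / 2"
    using z by (auto simp: r_def)
  then have R: "1 < R1" "R1 \<le> cmod z" "1 \<le> R2" "R2 < exp 1" "cmod z \<le> R2"
    using z by (auto simp: R1_def R2_def)
  define \<psi>0 where "\<psi>0 k = - (of_nat (Suc k) * inverse z ^ (k + 2))" for k
  define \<psi>1 where "\<psi>1 k = of_nat k * z ^ (k - 1)" for k
  define CQ where "CQ = (\<Sum>k. 2 * (real k + 1)^2 * inverse R1 ^ k * N0 (b (- int (Suc k))))"
  define CP where "CP = (\<Sum>k. 1 * (real k + 1)^2 * R2^k * N1 (b (int k)))"
  have deriv_mem: "principal_series \<psi>0 \<in> B0" "regular_series \<psi>1 \<in> B1"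
    using principal_series(1)[OF _ _ inverse_power_deriv_le_square_times_power[OF R(1,2)]]
      regular_series(1)[OF _ R(4) power_deriv_le_square_times_power[OF R(3,5)]]
      inverse_norm_bounds[OF R(2,1)] R
    unfolding \<psi>0_def \<psi>1_def by auto
  have series_mem: "principal_series (\<lambda>k. inverse w ^ Suc k) \<in> B0" "regular_series (\<lambda>k. w ^ k) \<in> B1"
    if "R1 \<le> cmod w" "cmod w \<le> R2" for w
    using principal_series(1)[OF _ _ inverse_power_le_square_times_power[OF R(1) that(1), of _ "Suc _"]]
      regular_series(1)[OF _ R(4) power_le_square_times_power[OF _ that(2)]]
      inverse_norm_bounds[OF R(2,1)] R
    by auto
  have "sum_norm B0 N0 B1 N1 (scaleCx (inverse (w - z)) (laurent w - laurent z)
          - (principal_series \<psi>0 + regular_series \<psi>1)) \<le> cmod (w - z) * (CQ + CP)"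
    if "w \<noteq> z" "cmod (w - z) < r" for w
  proof -
    have "\<bar>cmod w - cmod z\<bar> \<le> cmod (w - z)" by (rule norm_triangle_ineq3)
    then have w: "R1 \<le> cmod w" "cmod w \<le> R2" using that by (auto simp: R1_def R2_def)
    have "scaleCx (inverse (w - z)) (laurent w - laurent z) - (principal_series \<psi>0 + regular_series \<psi>1)
        = (scaleCx (inverse (w - z)) (principal_series (\<lambda>k. inverse w ^ Suc k)
             - principal_series (\<lambda>k. inverse z ^ Suc k)) - principal_series \<psi>0)
          + (scaleCx (inverse (w - z)) (regular_series (\<lambda>k. w ^ k) - regular_series (\<lambda>k. z ^ k))
             - regular_series \<psi>1)"
      unfolding laurent_def scaleCx_diff_right scaleCx_add_right by (simp add: algebra_simps)
    also have "sum_norm B0 N0 B1 N1 \<dots> \<le> cmod (w - z) * CQ + cmod (w - z) * CP"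
      unfolding CQ_def CP_def \<psi>0_def \<psi>1_def
      using series_mem[OF w] series_mem[OF R(2,5)] deriv_mem
        principal_quotient_le[OF R(1) w(1) R(2) that(1)] regular_quotient_le[OF R(3,4) w(2) R(5) that(1)]
      by (intro order_trans[OF sum_norm_add_le] add_mono)
        (auto intro!: B0.diff_mem B1.diff_mem B0.scale_mem B1.scale_mem simp: \<psi>0_def \<psi>1_def)
    finally show ?thesis by (simp add: distrib_left)
  qed
  then show "\<exists>d\<in>sum_space B0 B1. \<exists>C r. 0 < r \<and> (\<forall>w\<in>annulus. w \<noteq> z \<and> cmod (w - z) < r \<longrightarrow>
      sum_norm B0 N0 B1 N1 (scaleCx (inverse (w - z)) (laurent w - laurent z) - d) \<le> cmod (w - z) * C)"
    using r(1) deriv_mem by (blast intro: sum_space_add_mem)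
qed

end

section \<open>Representations at \<open>s\<close> and at \<open>|s|\<close>\<close>

lemma pseudolattice_norm_coord_le:
  assumes "pseudolattice X" "banach_sp B NB" "b \<in> fst (X (B, NB))"
  shows "NB (b m) \<le> snd (X (B, NB)) b"
  using assms unfolding pseudolattice_def by blast

lemma J_space_laurent_coeffs:
  fixes X0 X1 :: "'v::cnormed pseudo"
  assumes X: "pseudolattice X0" "pseudolattice X1" and B: "banach_sp B0 N0" "banach_sp B1 N1"
    and b: "b \<in> J_space X0 X1 B0 N0 B1 N1"
  shows "laurent_coeffs B0 N0 B1 N1 b (snd (X0 (B0, N0)) b)
           (snd (X1 (B1, N1)) (\<lambda>n. scaleCx (exp (of_int n)) (b n)))"
proof -
  interpret B0: cbanach_space B0 N0 by (rule cbanach_space.intro[OF B(1)])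
  interpret B1: cbanach_space B1 N1 by (rule cbanach_space.intro[OF B(2)])
  have mem: "b n \<in> B0" "b n \<in> B1" "b \<in> fst (X0 (B0, N0))"
    "(\<lambda>n. scaleCx (exp (of_int n)) (b n)) \<in> fst (X1 (B1, N1))" for n
    using b unfolding J_space_def by auto
  have "exp 1 ^ k * N1 (b (int k)) \<le> snd (X1 (B1, N1)) (\<lambda>n. scaleCx (exp (of_int n)) (b n))" for k
    using pseudolattice_norm_coord_le[OF X(2) B(2) mem(4), of "int k"]
    by (simp add: B1.norm_scale[OF mem(2)] exp_of_nat_mult[of k 1, symmetric]
        flip: exp_of_real)
  then have "N1 (b (int k)) \<le> snd (X1 (B1, N1)) (\<lambda>n. scaleCx (exp (of_int n)) (b n)) * inverse (exp 1) ^ k"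
    for k by (simp add: field_simps power_inverse)
  then show ?thesis
    using mem pseudolattice_norm_coord_le[OF X(1) B(1) mem(3)]
    by unfold_locales (simp_all add: B(1,2))
qed

lemma J_space_rotate:
  fixes X0 X1 :: "'v::cnormed pseudo"
  assumes B: "banach_sp B0 N0" "banach_sp B1 N1" and rot: "rot_inv_couple X0 X1"
    and b: "b \<in> J_space X0 X1 B0 N0 B1 N1"
  shows "(\<lambda>n. scaleCx (cis (of_int n * \<tau>)) (b n)) \<in> J_space X0 X1 B0 N0 B1 N1"
    "J_norm X0 X1 B0 N0 B1 N1 (\<lambda>n. scaleCx (cis (of_int n * \<tau>)) (b n)) = J_norm X0 X1 B0 N0 B1 N1 b"
proof -
  interpret B0: cbanach_space B0 N0 by (rule cbanach_space.intro[OF B(1)])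
  interpret B1: cbanach_space B1 N1 by (rule cbanach_space.intro[OF B(2)])
  have mem: "b n \<in> B0" "b n \<in> B1" "b \<in> fst (X0 (B0, N0))"
    "(\<lambda>n. scaleCx (exp (of_int n)) (b n)) \<in> fst (X1 (B1, N1))" for n
    using b unfolding J_space_def by auto
  have X0: "(\<lambda>n. scaleCx (cis (of_int n * \<tau>)) (b n)) \<in> fst (X0 (B0, N0))"
    "snd (X0 (B0, N0)) (\<lambda>n. scaleCx (cis (of_int n * \<tau>)) (b n)) = snd (X0 (B0, N0)) b"
    using rot B(1) mem(3) unfolding rot_inv_couple_def rotation_invariant_def by blast+
  have commute: "(\<lambda>n. scaleCx (exp (of_int n)) (scaleCx (cis (of_int n * \<tau>)) (b n)))
      = (\<lambda>n. scaleCx (cis (of_int n * \<tau>)) (scaleCx (exp (of_int n)) (b n)))"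
    by (simp add: scaleCx_scaleCx mult.commute)
  have "\<forall>c\<in>fst (X1 (B1, N1)). (\<lambda>n. scaleCx (cis (of_int n * \<tau>)) (c n)) \<in> fst (X1 (B1, N1)) \<and>
      snd (X1 (B1, N1)) (\<lambda>n. scaleCx (cis (of_int n * \<tau>)) (c n)) = snd (X1 (B1, N1)) c"
    using rot B(2) unfolding rot_inv_couple_def rotation_invariant_def by blast
  from bspec[OF this mem(4)]
  have X1: "(\<lambda>n. scaleCx (cis (of_int n * \<tau>)) (scaleCx (exp (of_int n)) (b n))) \<in> fst (X1 (B1, N1))"
    "snd (X1 (B1, N1)) (\<lambda>n. scaleCx (cis (of_int n * \<tau>)) (scaleCx (exp (of_int n)) (b n)))
       = snd (X1 (B1, N1)) (\<lambda>n. scaleCx (exp (of_int n)) (b n))"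
    by simp_all
  show "(\<lambda>n. scaleCx (cis (of_int n * \<tau>)) (b n)) \<in> J_space X0 X1 B0 N0 B1 N1"
    "J_norm X0 X1 B0 N0 B1 N1 (\<lambda>n. scaleCx (cis (of_int n * \<tau>)) (b n)) = J_norm X0 X1 B0 N0 B1 N1 b"
    unfolding J_space_def J_norm_def mem_Collect_eq commute using X0 X1 mem B0.scale_mem B1.scale_mem by auto
qed

lemma Bs_representation_norms_rotate:
  fixes X0 X1 :: "'v::cnormed pseudo"
  assumes B: "banach_sp B0 N0" "banach_sp B1 N1" and rot: "rot_inv_couple X0 X1"
  shows "{J_norm X0 X1 B0 N0 B1 N1 b | b. b \<in> J_space X0 X1 B0 N0 B1 N1 \<and>
            zsum_conv B0 N0 B1 N1 (\<lambda>n. scaleCx ((t * cis \<tau>) powi n) (b n)) x}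
       = {J_norm X0 X1 B0 N0 B1 N1 b | b. b \<in> J_space X0 X1 B0 N0 B1 N1 \<and>
            zsum_conv B0 N0 B1 N1 (\<lambda>n. scaleCx (t powi n) (b n)) x}"
    (is "{_ | b. _ \<and> ?rep (t * cis \<tau>) b} = {_ | b. _ \<and> ?rep t b}")
proof -
  let ?rot = "\<lambda>\<theta> b n. scaleCx (cis (of_int n * \<theta>)) (b n)"
  have rep: "?rep (t * cis \<tau>) b = ?rep t (?rot \<tau> b)" for b
    by (simp add: scaleCx_scaleCx power_int_mult_distrib cis_power_int mult_ac)
  have rot_inverse: "scaleCx (cis (of_int n * \<tau>)) (scaleCx (cis (of_int n * - \<tau>)) (c n)) = c n"
    for c n by (simp add: scaleCx_scaleCx cis_mult)
  note J = J_space_rotate[OF B rot]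
  show ?thesis
  proof (intro equalityI subsetI)
    fix v assume "v \<in> {J_norm X0 X1 B0 N0 B1 N1 b |b. b \<in> J_space X0 X1 B0 N0 B1 N1 \<and> ?rep (t * cis \<tau>) b}"
    then obtain b where "b \<in> J_space X0 X1 B0 N0 B1 N1" "?rep (t * cis \<tau>) b" "v = J_norm X0 X1 B0 N0 B1 N1 b"
      by blast
    then show "v \<in> {J_norm X0 X1 B0 N0 B1 N1 b |b. b \<in> J_space X0 X1 B0 N0 B1 N1 \<and> ?rep t b}"
      using J[of b \<tau>] rep[of b] by (intro CollectI exI[of _ "?rot \<tau> b"]) auto
  next
    fix v assume "v \<in> {J_norm X0 X1 B0 N0 B1 N1 b |b. b \<in> J_space X0 X1 B0 N0 B1 N1 \<and> ?rep t b}"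
    then obtain b where "b \<in> J_space X0 X1 B0 N0 B1 N1" "?rep t b" "v = J_norm X0 X1 B0 N0 B1 N1 b"
      by blast
    then show "v \<in> {J_norm X0 X1 B0 N0 B1 N1 b |b. b \<in> J_space X0 X1 B0 N0 B1 N1 \<and> ?rep (t * cis \<tau>) b}"
    proof (intro CollectI exI[of _ "?rot (- \<tau>) b"] conjI)
      show "?rep (t * cis \<tau>) (?rot (- \<tau>) b)" unfolding rep rot_inverse by fact
    qed (use J[of b "- \<tau>"] \<open>v = _\<close> in auto)
  qed
qed

lemma Bs_space_rotate:
  fixes X0 X1 :: "'v::cnormed pseudo"
  assumes "banach_sp B0 N0" "banach_sp B1 N1" "rot_inv_couple X0 X1"
  shows "Bs_space X0 X1 B0 N0 B1 N1 (t * cis \<tau>) = Bs_space X0 X1 B0 N0 B1 N1 t"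
    and "Bs_norm X0 X1 B0 N0 B1 N1 (t * cis \<tau>) x = Bs_norm X0 X1 B0 N0 B1 N1 t x"
proof -
  note reps = Bs_representation_norms_rotate[OF assms]
  have "x \<in> Bs_space X0 X1 B0 N0 B1 N1 (t * cis \<tau>) \<longleftrightarrow> x \<in> Bs_space X0 X1 B0 N0 B1 N1 t" for x
    using reps[of t \<tau> x] unfolding Bs_space_def by blast
  then show "Bs_space X0 X1 B0 N0 B1 N1 (t * cis \<tau>) = Bs_space X0 X1 B0 N0 B1 N1 t" by blast
  show "Bs_norm X0 X1 B0 N0 B1 N1 (t * cis \<tau>) x = Bs_norm X0 X1 B0 N0 B1 N1 t x"
    unfolding Bs_norm_def reps ..
qed

lemma F_space_value_in_Bs_space:
  assumes "f \<in> F_space X0 X1 B0 N0 B1 N1" "s \<in> annulus"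
  shows "f s \<in> Bs_space X0 X1 B0 N0 B1 N1 s"
  using assms unfolding F_space_def Bs_space_def by blast

lemma Bs_space_value_of_F_space:
  fixes X0 X1 :: "'v::cnormed pseudo"
  assumes X: "pseudolattice X0" "pseudolattice X1" and couple: "banach_couple B0 N0 B1 N1"
    and s: "s \<in> annulus" and x: "x \<in> Bs_space X0 X1 B0 N0 B1 N1 s"
  shows "\<exists>f\<in>F_space X0 X1 B0 N0 B1 N1. f s = x"
proof -
  obtain c0 c1 where B: "banach_sp B0 N0" "banach_sp B1 N1"
    and c: "\<forall>x\<in>B0. norm x \<le> c0 * N0 x" "\<forall>x\<in>B1. norm x \<le> c1 * N1 x"
    using couple unfolding banach_couple_def by blast
  obtain b where b: "b \<in> J_space X0 X1 B0 N0 B1 N1"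
    and bx: "zsum_conv B0 N0 B1 N1 (\<lambda>n. scaleCx (s powi n) (b n)) x"
    using x unfolding Bs_space_def by blast
  interpret laurent_coeffs B0 N0 B1 N1 b "snd (X0 (B0, N0)) b"
      "snd (X1 (B1, N1)) (\<lambda>n. scaleCx (exp (of_int n)) (b n))"
    by (rule J_space_laurent_coeffs[OF X B b])
  have "laurent \<in> F_space X0 X1 B0 N0 B1 N1"
    unfolding F_space_def using laurent_analytic laurent_zsum_conv b by blast
  moreover have "laurent s = x"
    using zsum_conv_unique[OF c _ laurent_zsum_conv[OF s] bx] coeff_mem0 B0.scale_mem by blast
  ultimately show ?thesis by blast
qed

theorem lemma2p1:
  fixes X0 X1 :: "'v::cnormed pseudo"
    and B0 B1 :: "'v set" and N0 N1 :: "'v \<Rightarrow> real"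
  assumes "pseudolattice X0" and "pseudolattice X1" and "rot_inv_couple X0 X1"
    and "banach_couple B0 N0 B1 N1"
  shows "\<forall>s\<in>annulus.
     (\<forall>f\<in>F_space X0 X1 B0 N0 B1 N1.
        f s \<in> Bs_space X0 X1 B0 N0 B1 N1 (complex_of_real (cmod s))) \<and>
     (\<forall>x\<in>Bs_space X0 X1 B0 N0 B1 N1 (complex_of_real (cmod s)).
        \<exists>f\<in>F_space X0 X1 B0 N0 B1 N1. f s = x) \<and>
     Bs_space X0 X1 B0 N0 B1 N1 s = Bs_space X0 X1 B0 N0 B1 N1 (complex_of_real (cmod s)) \<and>
     (\<forall>x\<in>Bs_space X0 X1 B0 N0 B1 N1 s.
        Bs_norm X0 X1 B0 N0 B1 N1 s x = Bs_norm X0 X1 B0 N0 B1 N1 (complex_of_real (cmod s)) x)"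
proof
  fix s assume s: "s \<in> annulus"
  have B: "banach_sp B0 N0" "banach_sp B1 N1" using assms(4) unfolding banach_couple_def by auto
  have polar: "s = complex_of_real (cmod s) * cis (Arg s)"
    using rcis_cmod_Arg[of s] by (simp add: rcis_def)
  note rotate = Bs_space_rotate[OF B assms(3), of "complex_of_real (cmod s)" "Arg s", folded polar]
  show "(\<forall>f\<in>F_space X0 X1 B0 N0 B1 N1.
        f s \<in> Bs_space X0 X1 B0 N0 B1 N1 (complex_of_real (cmod s))) \<and>
     (\<forall>x\<in>Bs_space X0 X1 B0 N0 B1 N1 (complex_of_real (cmod s)).
        \<exists>f\<in>F_space X0 X1 B0 N0 B1 N1. f s = x) \<and>
     Bs_space X0 X1 B0 N0 B1 N1 s = Bs_space X0 X1 B0 N0 B1 N1 (complex_of_real (cmod s)) \<and>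
     (\<forall>x\<in>Bs_space X0 X1 B0 N0 B1 N1 s.
        Bs_norm X0 X1 B0 N0 B1 N1 s x = Bs_norm X0 X1 B0 N0 B1 N1 (complex_of_real (cmod s)) x)"
    using F_space_value_in_Bs_space[of _ X0 X1 B0 N0 B1 N1 s, OF _ s] Bs_space_value_of_F_space[OF assms(1,2,4) s] rotate
    by auto
qed

end
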